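(* Let ${\cal H}_1=(V_1,{\cal E}_1)$ and ${\cal H}_2=(V_2,{\cal E}_2)$ be vertex-disjoint $1$-Sperner hypergraphs and let $z\notin V_1\cup V_2$. Then the gluing ${\cal H}_1\odot{\cal H}_2$ is a $1$-Sperner hypergraph, unless ${\cal E}_1=\{V_1\}$ and ${\cal E}_2=\{\emptyset\}$, in which case ${\cal H}_1\odot{\cal H}_2$ is not Sperner.
   Context: A hypergraph ${\cal H}=(V,{\cal E})$ consists of a finite vertex set $V$ and a set ${\cal E}$ of subsets of $V$ (hyperedges). It is Sperner if no hyperedge properly contains another, and $1$-Sperner if every two distinct hyperedges $e,f$ satisfy $\min\{|e\setminus f|,|f\setminus e|\}=1$ (in particular every hypergraph with at most one hyperedge is $1$-Sperner). Given vertex-disjoint hypergraphs ${\cal H}_1=(V_1,{\cal E}_1)$, ${\cal H}_2=(V_2,{\cal E}_2)$ and a new vertex $z\notin V_1\cup V_2$, the gluing ${\cal H}_1\odot{\cal H}_2$ is the hypergraph with vertex set $V_1\cup V_2\cup\{z\}$ and hyperedge set $\{\{z\}\cup e: e\in{\cal E}_1\}\cup\{V_1\cup e: e\in{\cal E}_2\}$. *)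

theory Defs
  imports Main
begin

type_synonym 'a hypergraph = "'a set \<times> 'a set set"

definition hypergraph :: "'a hypergraph \<Rightarrow> bool" where
  "hypergraph H \<longleftrightarrow> finite (fst H) \<and> (\<forall>e\<in>snd H. e \<subseteq> fst H)"

definition sperner :: "'a hypergraph \<Rightarrow> bool" where
  "sperner H \<longleftrightarrow> (\<forall>e\<in>snd H. \<forall>f\<in>snd H. \<not> (e \<subset> f))"

definition one_sperner :: "'a hypergraph \<Rightarrow> bool" where
  "one_sperner H \<longleftrightarrow> (\<forall>e\<in>snd H. \<forall>f\<in>snd H. e \<noteq> f \<longrightarrow>
      min (card (e - f)) (card (f - e)) = 1)"

definition gluing :: "'a hypergraph \<Rightarrow> 'a hypergraph \<Rightarrow> 'a \<Rightarrow> 'a hypergraph" where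
  "gluing H1 H2 z = (fst H1 \<union> fst H2 \<union> {z},
      {insert z e | e. e \<in> snd H1} \<union> {fst H1 \<union> e | e. e \<in> snd H2})"

end

theory Submission
  imports Defs
begin

text \<open>Adding z to every edge of H1, or V1 to every edge of H2, leaves pairwise differences
  unchanged, so only mixed pairs z + e, V1 + f need care. For them one difference is {z} and the
  other is (V1 - e) + f, which is empty only if e = V1 and f is empty. A 1-Sperner hypergraph is
  Sperner, so V1 \<in> E1 forces E1 = {V1} and {} \<in> E2 forces E2 = {{}}: exactly the exceptional
  case, where V1 \<subset> z + V1 are both edges.\<close>

lemma one_sperner_imp_sperner: "one_sperner H \<Longrightarrow> sperner H"
  unfolding one_sperner_def sperner_def
  by (metis Diff_eq_empty_iff card.empty min_0L less_le zero_neq_one)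

lemma sperner_vertex_set_edge:
  assumes "sperner H" "hypergraph H" "fst H \<in> snd H"
  shows "snd H = {fst H}"
  using assms unfolding sperner_def hypergraph_def by blast

lemma sperner_empty_edge:
  assumes "sperner H" "{} \<in> snd H"
  shows "snd H = {{}}"
  using assms unfolding sperner_def by blast

lemma one_sperner_image:
  assumes "one_sperner (V, E)" and "\<And>e f. e \<in> E \<Longrightarrow> f \<in> E \<Longrightarrow> g e - g f = e - f"
  shows "one_sperner (W, g ` E)"
  using assms unfolding one_sperner_def by (metis image_iff snd_conv)

lemma one_sperner_Un:
  assumes "one_sperner (V, E)" and "one_sperner (W, F)"
    and "\<And>e f. e \<in> E \<Longrightarrow> f \<in> F \<Longrightarrow> e \<noteq> f \<Longrightarrow> min (card (e - f)) (card (f - e)) = 1"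
  shows "one_sperner (U, E \<union> F)"
  unfolding one_sperner_def snd_conv
proof (intro ballI impI)
  fix e f assume "e \<in> E \<union> F" "f \<in> E \<union> F" "e \<noteq> f"
  then show "min (card (e - f)) (card (f - e)) = 1"
    using assms(1,2) assms(3)[of e f] assms(3)[of f e]
    unfolding one_sperner_def snd_conv by (metis Un_iff min.commute)
qed

lemma gluing_eq:
  "gluing (V1, E1) (V2, E2) z = (V1 \<union> V2 \<union> {z}, insert z ` E1 \<union> (\<union>) V1 ` E2)"
  by (auto simp: gluing_def)

lemma gluing_mixed_pair:
  assumes "e \<subseteq> V1" "f \<subseteq> V2" "finite V1" "finite V2" "V1 \<inter> V2 = {}" "z \<notin> V1 \<union> V2"
    and "\<not> (e = V1 \<and> f = {})"
  shows "min (card (insert z e - (V1 \<union> f))) (card ((V1 \<union> f) - insert z e)) = 1"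
proof -
  have "insert z e - (V1 \<union> f) = {z}" using assms by auto
  moreover have "(V1 \<union> f) - insert z e = (V1 - e) \<union> f" using assms by auto
  moreover have "(V1 - e) \<union> f \<noteq> {}" using assms(1,7) by auto
  moreover have "finite ((V1 - e) \<union> f)" using assms(2-4) finite_subset by auto
  ultimately show ?thesis by (simp add: Suc_le_eq card_gt_0_iff)
qed

theorem proposition2:
  fixes V1 V2 :: "'a set" and E1 E2 :: "'a set set" and z :: 'a
  assumes "hypergraph (V1, E1)" and "hypergraph (V2, E2)"
    and "V1 \<inter> V2 = {}"
    and "one_sperner (V1, E1)" and "one_sperner (V2, E2)"
    and "z \<notin> V1 \<union> V2"
  shows "(\<not> (E1 = {V1} \<and> E2 = {{}}) \<longrightarrow> one_sperner (gluing (V1, E1) (V2, E2) z))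
       \<and> (E1 = {V1} \<and> E2 = {{}} \<longrightarrow> \<not> sperner (gluing (V1, E1) (V2, E2) z))"
proof (intro conjI impI)
  have edges: "finite V1" "finite V2" "\<And>e. e \<in> E1 \<Longrightarrow> e \<subseteq> V1" "\<And>f. f \<in> E2 \<Longrightarrow> f \<subseteq> V2"
    using assms(1,2) by (auto simp: hypergraph_def)
  assume nondegenerate: "\<not> (E1 = {V1} \<and> E2 = {{}})"
  have not_both: "\<not> (e = V1 \<and> f = {})" if "e \<in> E1" "f \<in> E2" for e f
    using that nondegenerate assms(1,2,4,5) one_sperner_imp_sperner
      sperner_vertex_set_edge[of "(V1, E1)"] sperner_empty_edge[of "(V2, E2)"] by auto
  have "one_sperner (V1 \<union> V2 \<union> {z}, insert z ` E1)"
    by (rule one_sperner_image[OF assms(4)]) (use edges(3) assms(6) in blast)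
  moreover have "one_sperner (V1 \<union> V2 \<union> {z}, (\<union>) V1 ` E2)"
    by (rule one_sperner_image[OF assms(5)]) (use edges(4) assms(3) in blast)
  ultimately show "one_sperner (gluing (V1, E1) (V2, E2) z)"
    unfolding gluing_eq
    by (rule one_sperner_Un) (use gluing_mixed_pair[OF edges(3,4,1,2) assms(3,6) not_both] in auto)
next
  assume "E1 = {V1} \<and> E2 = {{}}"
  moreover have "V1 \<subset> insert z V1" using assms(6) by auto
  ultimately show "\<not> sperner (gluing (V1, E1) (V2, E2) z)"
    unfolding sperner_def gluing_eq by auto
qed

end
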